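(* For all odd integers $n\ge1$ and real numbers $a\ge1$, $x,y\in(0,\pi)$, we have $\Theta_{n,a}(x,y)\ge\sin(x)\sin(y)$. Equality holds if and only if $n=1$.
   Context: For a real number $a$ and integers $0\le m$, $\binom{m+a}{m}=\frac{(a+1)(a+2)\cdots(a+m)}{m!}$ (equal to $1$ when $m=0$). For an integer $n\ge1$, $\Theta_{n,a}(x,y)=\sum_{j=1}^n\binom{n+a-j}{n-j}\frac{\sin(jx)\sin(jy)}{j}$. *)

theory Defs
  imports Complex_Main
begin

text \<open>Generalized binomial coefficient binom(m+a, m) = (a+1)(a+2)...(a+m)/m!, equal to 1 for m = 0.\<close>
definition binom_shift :: "nat \<Rightarrow> real \<Rightarrow> real" where
  "binom_shift m a = (\<Prod>i=1..m. a + real i) / fact m"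

definition Theta :: "nat \<Rightarrow> real \<Rightarrow> real \<Rightarrow> real \<Rightarrow> real" where
  "Theta n a x y = (\<Sum>j=1..n. binom_shift (n - j) a * (sin (real j * x) * sin (real j * y)) / real j)"

end

theory Submission
  imports Defs
begin

text \<open>
  Since \<open>2 sin (j x) sin (j y) = (1 - cos (j (x + y))) - (1 - cos (j (x - y)))\<close>, a sum
  \<open>\<Sum>j. w j sin (j x) sin (j y) / j\<close> is half an increment of a primitive of the sine
  polynomial \<open>\<Sum>j. w j sin (j t)\<close>. That primitive is even and \<open>2 pi\<close>-periodic, so
  the sum is nonnegative on \<open>(0, pi)\<^sup>2\<close> whenever the sine polynomial is nonnegative
  on \<open>(0, pi)\<close>. Expanding \<open>binom(m + a, m)\<close> as \<open>\<Sum>i\<le>m. (m + 1 - i) binom(i + a - 2, i)\<close>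
  writes \<open>Theta n a\<close> as a combination, with nonnegative coefficients when \<open>a \<ge> 1\<close>,
  of the sums with Fejer weights \<open>m + 1 - j\<close>, the one with \<open>m = n\<close> having
  coefficient 1. Fejer sine polynomials are nonnegative, and for odd \<open>n\<close> the one of
  degree \<open>n\<close> even dominates \<open>sin t\<close>, strictly away from \<open>t = 2 pi / 3\<close> when
  \<open>n \<ge> 3\<close>.
\<close>

definition sine_sum :: "(nat \<Rightarrow> real) \<Rightarrow> nat \<Rightarrow> real \<Rightarrow> real" where
  "sine_sum w n t = (\<Sum>j=1..n. w j * sin (real j * t))"

definition sine_sum_primitive :: "(nat \<Rightarrow> real) \<Rightarrow> nat \<Rightarrow> real \<Rightarrow> real" where
  "sine_sum_primitive w n t = (\<Sum>j=1..n. w j * (1 - cos (real j * t)) / real j)"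

definition sin_product_sum :: "(nat \<Rightarrow> real) \<Rightarrow> nat \<Rightarrow> real \<Rightarrow> real \<Rightarrow> real" where
  "sin_product_sum w n x y = (\<Sum>j=1..n. w j * (sin (real j * x) * sin (real j * y)) / real j)"

lemma has_real_derivative_sine_sum_primitive:
  "(sine_sum_primitive w n has_real_derivative sine_sum w n t) (at t)"
  unfolding sine_sum_primitive_def[abs_def] sine_sum_def
  by (rule DERIV_sum) (auto intro!: derivative_eq_intros simp: field_simps)

lemma continuous_on_sine_sum_primitive: "continuous_on A (sine_sum_primitive w n)"
  by (meson DERIV_isCont has_real_derivative_sine_sum_primitive continuous_at_imp_continuous_on)

lemma sine_sum_primitive_minus: "sine_sum_primitive w n (- t) = sine_sum_primitive w n t"
  unfolding sine_sum_primitive_def by simp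

lemma sine_sum_primitive_two_pi_minus:
  "sine_sum_primitive w n (2 * pi - t) = sine_sum_primitive w n t"
proof -
  have "cos (real j * (2 * pi - t)) = cos (real j * t)" for j :: nat
  proof -
    have "real j * (2 * pi - t) = 2 * real j * pi - real j * t"
      by (simp add: algebra_simps)
    then show ?thesis by (simp add: cos_diff)
  qed
  then show ?thesis unfolding sine_sum_primitive_def by simp
qed

lemma sin_product_sum_eq_primitive_diff:
  "sin_product_sum w n x y =
     (sine_sum_primitive w n (x + y) - sine_sum_primitive w n (x - y)) / 2"
proof -
  have "w j * (sin (real j * x) * sin (real j * y)) / real j =
        (w j * (1 - cos (real j * (x + y))) / real j
          - w j * (1 - cos (real j * (x - y))) / real j) / 2" for j
  proof -
    have plus: "cos (real j * (x + y)) = cos (real j * x) * cos (real j * y) - sin (real j * x) * sin (real j * y)"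
      by (simp add: distrib_left cos_add)
    have minus: "cos (real j * (x - y)) = cos (real j * x) * cos (real j * y) + sin (real j * x) * sin (real j * y)"
      by (simp add: right_diff_distrib cos_diff)
    show ?thesis unfolding plus minus by (cases "j = 0") (simp_all add: field_simps)
  qed
  then show ?thesis
    unfolding sin_product_sum_def sine_sum_primitive_def
    by (simp only: sum_divide_distrib[symmetric] sum_subtractf)
qed

lemma sin_product_sum_as_primitive_increment:
  assumes "0 < x" "x < pi" "0 < y" "y < pi"
  obtains u v where "0 \<le> u" "u < v" "v \<le> pi"
    and "sin_product_sum w n x y = (sine_sum_primitive w n v - sine_sum_primitive w n u) / 2"
proof -
  have u: "sine_sum_primitive w n (x - y) = sine_sum_primitive w n \<bar>x - y\<bar>"
    by (cases "x \<ge> y") (auto simp: sine_sum_primitive_minus[of w n "x - y", symmetric])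
  show ?thesis
  proof (cases "x + y \<le> pi")
    case True
    then show ?thesis
      using assms by (intro that[of "\<bar>x - y\<bar>" "x + y"]) (auto simp: u sin_product_sum_eq_primitive_diff)
  next
    case False
    then show ?thesis
      using assms sine_sum_primitive_two_pi_minus[of w n "x + y"]
      by (intro that[of "\<bar>x - y\<bar>" "2 * pi - (x + y)"]) (auto simp: u sin_product_sum_eq_primitive_diff)
  qed
qed

lemma sin_product_sum_nonneg:
  assumes nonneg: "\<And>t. 0 < t \<Longrightarrow> t < pi \<Longrightarrow> sine_sum w n t \<ge> 0"
    and "0 < x" "x < pi" "0 < y" "y < pi"
  shows "sin_product_sum w n x y \<ge> 0"
proof -
  obtain u v where uv: "0 \<le> u" "u < v" "v \<le> pi"
    and eq: "sin_product_sum w n x y = (sine_sum_primitive w n v - sine_sum_primitive w n u) / 2"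
    using sin_product_sum_as_primitive_increment assms(2-5) .
  have "sine_sum_primitive w n u \<le> sine_sum_primitive w n v"
  proof (rule DERIV_nonneg_imp_increasing_open[OF less_imp_le[OF \<open>u < v\<close>]])
    fix t assume "u < t" "t < v"
    then show "\<exists>d. DERIV (sine_sum_primitive w n) t :> d \<and> d \<ge> 0"
      using has_real_derivative_sine_sum_primitive nonneg uv by force
  qed (rule continuous_on_sine_sum_primitive)
  then show ?thesis unfolding eq by simp
qed

lemma sin_product_sum_pos:
  assumes pos: "\<And>t. 0 < t \<Longrightarrow> t < pi \<Longrightarrow> t \<noteq> c \<Longrightarrow> sine_sum w n t > 0"
    and "0 < x" "x < pi" "0 < y" "y < pi"
  shows "sin_product_sum w n x y > 0"
proof -
  have strict_mono: "sine_sum_primitive w n u < sine_sum_primitive w n v"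
    if "0 \<le> u" "u < v" "v \<le> pi" "c \<notin> {u<..<v}" for u v
  proof (rule DERIV_pos_imp_increasing_open[OF \<open>u < v\<close>])
    fix t assume "u < t" "t < v"
    then show "\<exists>d. DERIV (sine_sum_primitive w n) t :> d \<and> d > 0"
      using has_real_derivative_sine_sum_primitive pos that by force
  qed (rule continuous_on_sine_sum_primitive)
  obtain u v where uv: "0 \<le> u" "u < v" "v \<le> pi"
    and eq: "sin_product_sum w n x y = (sine_sum_primitive w n v - sine_sum_primitive w n u) / 2"
    using sin_product_sum_as_primitive_increment assms(2-5) .
  have "sine_sum_primitive w n u < sine_sum_primitive w n v"
  proof (cases "c \<in> {u<..<v}")
    case True
    then have "sine_sum_primitive w n u < sine_sum_primitive w n c"
      and "sine_sum_primitive w n c < sine_sum_primitive w n v"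
      using uv by (auto intro!: strict_mono)
    then show ?thesis by linarith
  next
    case False
    then show ?thesis using uv by (intro strict_mono)
  qed
  then show ?thesis unfolding eq by simp
qed

lemma sum_of_bool_first:
  fixes f :: "nat \<Rightarrow> real"
  assumes "n \<ge> 1"
  shows "(\<Sum>j=1..n. of_bool (j = 1) * f j) = f 1"
proof -
  have "{1..n} \<inter> {j. j = 1} = {1}" using assms by auto
  then show ?thesis by (simp del: Int_def)
qed

lemma sine_sum_lower_first_weight:
  "n \<ge> 1 \<Longrightarrow> sine_sum (\<lambda>j. w j - of_bool (j = 1)) n t = sine_sum w n t - sin t"
  unfolding sine_sum_def left_diff_distrib sum_subtractf
  by (simp add: sum_of_bool_first)

lemma sin_product_sum_lower_first_weight:
  "n \<ge> 1 \<Longrightarrow> sin_product_sum (\<lambda>j. w j - of_bool (j = 1)) n x y = sin_product_sum w n x y - sin x * sin y"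
  unfolding sin_product_sum_def left_diff_distrib diff_divide_distrib sum_subtractf
  using sum_of_bool_first[of n "\<lambda>j. sin (real j * x) * sin (real j * y) / real j"]
  by (simp add: mult.assoc)

lemma abs_sin_nat_mult_le:
  assumes "0 \<le> t" "t \<le> pi"
  shows "\<bar>sin (real k * t)\<bar> \<le> real k * sin t"
proof (induction k)
  case 0
  then show ?case by simp
next
  case (Suc k)
  have s: "sin t \<ge> 0" using assms sin_ge_zero by blast
  have "sin (real (Suc k) * t) = sin (real k * t) * cos t + cos (real k * t) * sin t"
    by (simp add: distrib_right sin_add)
  also have "\<bar>\<dots>\<bar> \<le> \<bar>sin (real k * t)\<bar> * \<bar>cos t\<bar> + \<bar>cos (real k * t)\<bar> * sin t"
    using s by (metis abs_mult abs_of_nonneg abs_triangle_ineq)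
  also have "\<dots> \<le> real k * sin t * 1 + 1 * sin t"
    using Suc s by (intro add_mono mult_mono) auto
  finally show ?case by (simp add: algebra_simps)
qed

lemma abs_sin_nat_mult_less:
  assumes "0 < t" "t < pi" "k \<ge> 2"
  shows "\<bar>sin (real k * t)\<bar> < real k * sin t"
proof -
  obtain m where m: "k = Suc m" "m \<ge> 1" using assms(3) by (cases k) auto
  have s: "sin t > 0" using assms sin_gt_zero by blast
  have c: "\<bar>cos t\<bar> < 1"
    using assms cos_monotone_0_pi[of 0 t] cos_monotone_0_pi[of t pi] by auto
  have "sin (real k * t) = sin (real m * t) * cos t + cos (real m * t) * sin t"
    by (simp add: m distrib_right sin_add)
  also have "\<bar>\<dots>\<bar> \<le> \<bar>sin (real m * t)\<bar> * \<bar>cos t\<bar> + \<bar>cos (real m * t)\<bar> * sin t"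
    using s by (metis abs_mult abs_of_nonneg abs_triangle_ineq less_imp_le)
  also have "\<dots> \<le> real m * sin t * \<bar>cos t\<bar> + 1 * sin t"
    using abs_sin_nat_mult_le[of t m] assms s by (intro add_mono mult_mono) auto
  also have "\<dots> < real m * sin t * 1 + 1 * sin t"
    using c s m by (intro add_strict_right_mono mult_strict_left_mono) auto
  finally show ?thesis by (simp add: m algebra_simps)
qed

lemma cos_lt_one: "0 < t \<Longrightarrow> t < pi \<Longrightarrow> cos t < 1"
  using cos_monotone_0_pi[of 0 t] by simp

lemma cos_three_mult_lt_one:
  assumes "0 < t" "t < pi" "t \<noteq> 2 * pi / 3"
  shows "cos (3 * t) < 1"
proof -
  have "cos (3 * t) \<noteq> 1"
  proof
    assume "cos (3 * t) = 1"
    then obtain m :: int where m: "3 * t = real_of_int m * 2 * pi"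
      using cos_one_2pi_int by blast
    with assms have "0 < real_of_int m * 2 * pi" "real_of_int m * 2 * pi < 4 * pi"
      by linarith+
    then have "0 < real_of_int m" "real_of_int m < 2"
      by (auto simp: zero_less_mult_iff)
    then have "m = 1" by linarith
    with m assms show False by simp
  qed
  then show ?thesis using cos_le_one[of "3 * t"] by linarith
qed

lemma one_minus_cos_mult_sum_sin:
  "2 * (1 - cos t) * (\<Sum>j=1..m. sin (real j * t)) = sin t + sin (real m * t) - sin (real (Suc m) * t)"
proof (induction m)
  case 0
  then show ?case by simp
next
  case (Suc m)
  have "real (Suc (Suc m)) * t = real (Suc m) * t + t" "real m * t = real (Suc m) * t - t"
    by (simp_all add: algebra_simps)
  then have "sin (real (Suc (Suc m)) * t) = sin (real (Suc m) * t) * cos t + cos (real (Suc m) * t) * sin t"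
    "sin (real m * t) = sin (real (Suc m) * t) * cos t - cos (real (Suc m) * t) * sin t"
    by (simp_all only: sin_add sin_diff)
  then show ?case using Suc.IH by (simp add: algebra_simps)
qed

definition fejer_weight :: "nat \<Rightarrow> nat \<Rightarrow> real" where
  "fejer_weight m j = real m + 1 - real j"

lemma sine_sum_fejer_weight:
  "2 * (1 - cos t) * sine_sum (fejer_weight m) m t = real (Suc m) * sin t - sin (real (Suc m) * t)"
proof (induction m)
  case 0
  then show ?case by (simp add: sine_sum_def)
next
  case (Suc m)
  have "sine_sum (fejer_weight (Suc m)) (Suc m) t = sine_sum (fejer_weight m) m t + (\<Sum>j=1..Suc m. sin (real j * t))"
    by (simp add: sine_sum_def fejer_weight_def sum.distrib[symmetric] algebra_simps)
  then show ?case
    using Suc.IH one_minus_cos_mult_sum_sin[of t "Suc m"] by (simp add: algebra_simps)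
qed

lemma sine_sum_fejer_weight_nonneg:
  assumes "0 < t" "t < pi"
  shows "sine_sum (fejer_weight m) m t \<ge> 0"
proof -
  have "sin (real (Suc m) * t) \<le> real (Suc m) * sin t"
    using abs_sin_nat_mult_le[of t "Suc m"] assms by linarith
  then have "2 * (1 - cos t) * sine_sum (fejer_weight m) m t \<ge> 0"
    unfolding sine_sum_fejer_weight by simp
  then show ?thesis using cos_lt_one[OF assms] by (simp add: zero_le_mult_iff)
qed

lemma sine_sum_fejer_weight_odd:
  "(1 - cos t) * (sine_sum (fejer_weight (2 * k + 1)) (2 * k + 1) t - sin t) =
     real k * sin t - cos (real (k + 2) * t) * sin (real k * t)"
proof -
  have split: "real (2 * k + 2) * t = real (k + 2) * t + real k * t"
    by (simp add: algebra_simps)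
  have double: "sin (2 * t) = sin (real (k + 2) * t - real k * t)"
    by (simp add: algebra_simps)
  have "sin (real (2 * k + 2) * t) - sin (2 * t) = 2 * cos (real (k + 2) * t) * sin (real k * t)"
    unfolding split double sin_add sin_diff by simp
  then show ?thesis
    using sine_sum_fejer_weight[of t "2 * k + 1"] sin_double[of t]
    by (simp add: algebra_simps)
qed

lemma sine_sum_fejer_weight_odd_ge_sin:
  assumes "odd n" "0 < t" "t < pi"
  shows "sine_sum (fejer_weight n) n t \<ge> sin t"
proof -
  obtain k where k: "n = 2 * k + 1" using \<open>odd n\<close> oddE by blast
  have "\<bar>cos (real (k + 2) * t) * sin (real k * t)\<bar> \<le> 1 * (real k * sin t)"
    unfolding abs_mult using abs_sin_nat_mult_le[of t k] assms by (intro mult_mono) auto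
  then have "(1 - cos t) * (sine_sum (fejer_weight n) n t - sin t) \<ge> 0"
    unfolding k sine_sum_fejer_weight_odd by linarith
  then show ?thesis using cos_lt_one[OF assms(2,3)] by (simp add: zero_le_mult_iff)
qed

lemma sine_sum_fejer_weight_odd_gt_sin:
  assumes "odd n" "n \<ge> 3" "0 < t" "t < pi" "t \<noteq> 2 * pi / 3"
  shows "sine_sum (fejer_weight n) n t > sin t"
proof -
  obtain k where k: "n = 2 * k + 1" using \<open>odd n\<close> oddE by blast
  have s: "sin t > 0" using assms sin_gt_zero by blast
  have "cos (real (k + 2) * t) * sin (real k * t) < real k * sin t"
  proof (cases "k \<ge> 2")
    case True
    have "\<bar>cos (real (k + 2) * t) * sin (real k * t)\<bar> \<le> \<bar>sin (real k * t)\<bar>"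
      unfolding abs_mult by (intro mult_left_le_one_le) auto
    also have "\<dots> < real k * sin t"
      using abs_sin_nat_mult_less True assms by auto
    finally show ?thesis by linarith
  next
    case False
    then have "k = 1" using assms k by auto
    then show ?thesis using cos_three_mult_lt_one[OF assms(3-5)] s by simp
  qed
  then have "(1 - cos t) * (sine_sum (fejer_weight n) n t - sin t) > 0"
    unfolding k sine_sum_fejer_weight_odd by linarith
  then show ?thesis using cos_lt_one[OF assms(3,4)] by (simp add: zero_less_mult_iff)
qed

lemma sin_product_sum_fejer_weight_odd_ge:
  assumes "odd n" "0 < x" "x < pi" "0 < y" "y < pi"
  shows "sin_product_sum (fejer_weight n) n x y \<ge> sin x * sin y"
proof -
  have "n \<ge> 1" using \<open>odd n\<close> by presburger
  have "sin_product_sum (\<lambda>j. fejer_weight n j - of_bool (j = 1)) n x y \<ge> 0"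
    using assms sine_sum_fejer_weight_odd_ge_sin[OF \<open>odd n\<close>]
      sine_sum_lower_first_weight[OF \<open>n \<ge> 1\<close>, of "fejer_weight n"]
    by (intro sin_product_sum_nonneg) auto
  then show ?thesis using sin_product_sum_lower_first_weight[OF \<open>n \<ge> 1\<close>, of "fejer_weight n"] by simp
qed

lemma sin_product_sum_fejer_weight_odd_gt:
  assumes "odd n" "n \<ge> 3" "0 < x" "x < pi" "0 < y" "y < pi"
  shows "sin_product_sum (fejer_weight n) n x y > sin x * sin y"
proof -
  have "n \<ge> 1" using \<open>n \<ge> 3\<close> by simp
  have "sin_product_sum (\<lambda>j. fejer_weight n j - of_bool (j = 1)) n x y > 0"
    using assms sine_sum_fejer_weight_odd_gt_sin[OF \<open>odd n\<close> \<open>n \<ge> 3\<close>]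
      sine_sum_lower_first_weight[OF \<open>n \<ge> 1\<close>, of "fejer_weight n"]
    by (intro sin_product_sum_pos[where c = "2 * pi / 3"]) auto
  then show ?thesis using sin_product_sum_lower_first_weight[OF \<open>n \<ge> 1\<close>, of "fejer_weight n"] by simp
qed

lemma binom_shift_eq_gbinomial: "binom_shift m a = (a + real m) gchoose m"
proof -
  have "(\<Prod>i=1..m. a + real i) = pochhammer (a + 1) m"
    unfolding pochhammer_prod by (induction m) (simp_all add: algebra_simps)
  then show ?thesis by (simp add: binom_shift_def gbinomial_pochhammer')
qed

lemma binom_shift_eq_sum: "binom_shift m b = (\<Sum>i\<le>m. binom_shift i (b - 1))"
  using gbinomial_parallel_sum[of "b - 1" m] by (simp add: binom_shift_eq_gbinomial algebra_simps)

lemma binom_shift_eq_weighted_sum: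
  "binom_shift m b = (\<Sum>i\<le>m. (real m + 1 - real i) * binom_shift i (b - 2))"
proof (induction m)
  case 0
  then show ?case by (simp add: binom_shift_def)
next
  case (Suc m)
  have "(\<Sum>i\<le>Suc m. (real (Suc m) + 1 - real i) * binom_shift i (b - 2))
      = (\<Sum>i\<le>m. (real m + 1 - real i) * binom_shift i (b - 2)) + (\<Sum>i\<le>Suc m. binom_shift i (b - 2))"
    by (simp add: algebra_simps flip: sum.distrib)
  also have "\<dots> = binom_shift m b + binom_shift (Suc m) (b - 1)"
    using Suc.IH binom_shift_eq_sum[of "Suc m" "b - 1"] by simp
  also have "\<dots> = binom_shift (Suc m) b"
    using binom_shift_eq_sum[of "Suc m" b] binom_shift_eq_sum[of m b] by simp
  finally show ?case ..
qed

lemma binom_shift_nonneg: "b \<ge> -1 \<Longrightarrow> binom_shift m b \<ge> 0"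
  unfolding binom_shift_def by (intro divide_nonneg_pos prod_nonneg) auto

lemma Theta_eq_sum_fejer:
  "Theta n a x y =
     (\<Sum>i<n. binom_shift i (a - 2) * sin_product_sum (fejer_weight (n - i)) (n - i) x y)"
proof -
  define C where "C i = binom_shift i (a - 2)" for i
  define s where "s j = sin (real j * x) * sin (real j * y) / real j" for j
  define f where "f i j = C i * ((real n + 1 - real i - real j) * s j)" for i j
  have "Theta n a x y = (\<Sum>j\<in>{1..n}. \<Sum>i\<in>{i\<in>{..<n}. i + j \<le> n}. f i j)"
    unfolding Theta_def
  proof (rule sum.cong[OF refl])
    fix j assume j: "j \<in> {1..n}"
    have "binom_shift (n - j) a * (sin (real j * x) * sin (real j * y)) / real j
        = (\<Sum>i\<le>n - j. (real (n - j) + 1 - real i) * C i) * s j"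
      unfolding s_def C_def binom_shift_eq_weighted_sum[of "n - j" a] by simp
    also have "\<dots> = (\<Sum>i\<le>n - j. f i j)"
      unfolding sum_distrib_right f_def
      by (intro sum.cong) (use j in \<open>auto simp: of_nat_diff\<close>)
    also have "{..n - j} = {i\<in>{..<n}. i + j \<le> n}" using j by auto
    finally show "binom_shift (n - j) a * (sin (real j * x) * sin (real j * y)) / real j =
        (\<Sum>i\<in>{i\<in>{..<n}. i + j \<le> n}. f i j)" .
  qed
  also have "\<dots> = (\<Sum>i\<in>{..<n}. \<Sum>j\<in>{j\<in>{1..n}. i + j \<le> n}. f i j)"
    by (rule sum.swap_restrict[symmetric]) auto
  also have "\<dots> = (\<Sum>i<n. C i * sin_product_sum (fejer_weight (n - i)) (n - i) x y)"
  proof (rule sum.cong[OF refl])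
    fix i assume i: "i \<in> {..<n}"
    have "{j\<in>{1..n}. i + j \<le> n} = {1..n - i}" using i by auto
    then show "(\<Sum>j\<in>{j\<in>{1..n}. i + j \<le> n}. f i j) =
        C i * sin_product_sum (fejer_weight (n - i)) (n - i) x y"
      unfolding sin_product_sum_def sum_distrib_left f_def
      by (intro sum.cong) (use i in \<open>auto simp: of_nat_diff fejer_weight_def s_def\<close>)
  qed
  finally show ?thesis unfolding C_def .
qed

theorem theorem3p7:
  fixes n :: nat and a x y :: real
  assumes "odd n" and "n \<ge> 1" and "a \<ge> 1"
    and "0 < x" and "x < pi" and "0 < y" and "y < pi"
  shows "Theta n a x y \<ge> sin x * sin y \<and> (Theta n a x y = sin x * sin y \<longleftrightarrow> n = 1)"
proof -
  define T where "T m = sin_product_sum (fejer_weight m) m x y" for m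
  obtain k where n: "n = Suc k" using \<open>n \<ge> 1\<close> by (cases n) auto
  have decomp: "Theta n a x y = T n + (\<Sum>i<k. binom_shift (Suc i) (a - 2) * T (n - Suc i))"
    unfolding Theta_eq_sum_fejer T_def n sum.lessThan_Suc_shift by (simp add: binom_shift_def)
  have "T m \<ge> 0" for m
    unfolding T_def using assms sine_sum_fejer_weight_nonneg by (intro sin_product_sum_nonneg) auto
  then have rest: "(\<Sum>i<k. binom_shift (Suc i) (a - 2) * T (n - Suc i)) \<ge> 0"
    using binom_shift_nonneg \<open>a \<ge> 1\<close> by (intro sum_nonneg mult_nonneg_nonneg) auto
  have "T n \<ge> sin x * sin y"
    unfolding T_def using assms by (intro sin_product_sum_fejer_weight_odd_ge)
  moreover have "n \<ge> 3 \<Longrightarrow> T n > sin x * sin y"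
    unfolding T_def using assms by (intro sin_product_sum_fejer_weight_odd_gt)
  moreover have "n \<noteq> 1 \<Longrightarrow> n \<ge> 3"
    using \<open>odd n\<close> \<open>n \<ge> 1\<close> by presburger
  moreover have "n = 1 \<Longrightarrow> Theta n a x y = sin x * sin y"
    by (simp add: Theta_def binom_shift_def)
  ultimately show ?thesis using decomp rest by force
qed

end
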